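(* For every real $2\times n$ matrix $X$ there exists a real $2\times n$ matrix $Y$ with $\Delta_{i,j}(Y)\ge 0$ for all $1\le i<j\le n$ such that the multiset $\{\Delta_{i,j}(Y):1\le i<j\le n\}$ coincides with the multiset $\{|\Delta_{i,j}(X)|:1\le i<j\le n\}$.
   Context: For a real $2\times n$ matrix $X$ and $1\le i<j\le n$, $\Delta_{i,j}(X)$ is the determinant of the $2\times2$ submatrix formed by columns $i$ and $j$. *)

theory Defs
  imports "HOL-Analysis.Analysis" "HOL-Library.Multiset"
begin

(* A real 2 x n matrix is represented as X :: nat => nat => real, with X r c the
   entry in row r (r \<in> {0,1}) and column c (c < n); entries outside are irrelevant.
   Columns are 0-indexed: column c here is column c+1 of the paper. *)

definition minor2 :: "(nat \<Rightarrow> nat \<Rightarrow> real) \<Rightarrow> nat \<Rightarrow> nat \<Rightarrow> real" where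
  "minor2 X i j = X 0 i * X 1 j - X 0 j * X 1 i"

definition pairs_lt :: "nat \<Rightarrow> (nat \<times> nat) multiset" where
  "pairs_lt n = mset_set {(i, j). i < j \<and> j < n}"

end

theory Submission
  imports Defs
begin

text \<open>Changing the sign of a column changes no \<open>|\<Delta>\<^sub>i\<^sub>j|\<close>, so we may assume
  the second row is nonnegative: all columns lie in the closed upper half-plane. Sorting the
  columns by their argument then makes every \<open>\<Delta>\<^sub>i\<^sub>j\<close> with \<open>i < j\<close> nonnegative, and
  permuting columns only permutes the multiset of the \<open>|\<Delta>\<^sub>i\<^sub>j|\<close>.\<close>

lemma abs_minor2_commute: "\<bar>minor2 X i j\<bar> = \<bar>minor2 X j i\<bar>"
  by (simp add: minor2_def abs_minus_commute)

lemma abs_minor2_scale_columns: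
  assumes "\<And>c. \<bar>s c\<bar> = 1"
  shows "\<bar>minor2 (\<lambda>r c. s c * X r c) i j\<bar> = \<bar>minor2 X i j\<bar>"
proof -
  have "minor2 (\<lambda>r c. s c * X r c) i j = s i * s j * minor2 X i j"
    by (simp add: minor2_def algebra_simps)
  then show ?thesis
    by (simp add: abs_mult assms)
qed

text \<open>A monotone substitute for the argument of \<open>(a, b)\<close> with \<open>b \<ge> 0\<close>: it increases
  from \<open>-1\<close> at \<open>(1, 0)\<close> through \<open>0\<close> at \<open>(0, 1)\<close> to \<open>1\<close> at \<open>(-1, 0)\<close>, and needs no \<open>arctan\<close>.\<close>

definition half_plane_key :: "real \<Rightarrow> real \<Rightarrow> real" where
  "half_plane_key a b = - a / (\<bar>a\<bar> + b)"

lemma det_nonneg_if_half_plane_key_le: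
  fixes a b c d :: real
  assumes b: "b \<ge> 0" and d: "d \<ge> 0"
    and key: "half_plane_key a b \<le> half_plane_key c d"
  shows "a * d - c * b \<ge> 0"
proof (cases "\<bar>a\<bar> + b = 0 \<or> \<bar>c\<bar> + d = 0")
  case True
  then have "(a = 0 \<and> b = 0) \<or> (c = 0 \<and> d = 0)"
    using b d by linarith
  then show ?thesis by auto
next
  case False
  then have "\<bar>a\<bar> + b > 0" "\<bar>c\<bar> + d > 0"
    using b d by auto
  with key have k: "c * (\<bar>a\<bar> + b) \<le> a * (\<bar>c\<bar> + d)"
    by (simp add: half_plane_key_def divide_simps)
  consider "c * \<bar>a\<bar> = a * \<bar>c\<bar>" | "a \<ge> 0" "c < 0" | "a < 0" "c \<ge> 0"
    by (cases "a \<ge> 0"; cases "c \<ge> 0") auto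
  then show ?thesis
  proof cases
    case 1
    with k show ?thesis by (simp add: algebra_simps)
  next
    case 2
    then have "a * d \<ge> 0" "c * b \<le> 0"
      using b d by (simp_all add: mult_nonpos_nonneg)
    then show ?thesis by linarith
  next
    case 3
    then have "c * (\<bar>a\<bar> + b) \<ge> 0" "a * (\<bar>c\<bar> + d) < 0"
      using b \<open>\<bar>c\<bar> + d > 0\<close> by (simp_all add: mult_neg_pos)
    with k show ?thesis by linarith
  qed
qed

lemma exists_sorting_permutation:
  fixes f :: "nat \<Rightarrow> 'a::linorder"
  obtains p where "bij_betw p {..<n} {..<n}"
    and "\<And>k l. k \<le> l \<Longrightarrow> l < n \<Longrightarrow> f (p k) \<le> f (p l)"
proof
  let ?L = "sort_key f [0..<n]"
  show "bij_betw ((!) ?L) {..<n} {..<n}"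
    by (rule bij_betw_nth) auto
  show "f (?L ! k) \<le> f (?L ! l)" if "k \<le> l" "l < n" for k l
    using sorted_nth_mono[of "map f ?L" k l] that by simp
qed

lemma finite_pairs_lt_set: "finite {(i, j). i < j \<and> j < (n::nat)}"
  by (rule finite_subset[of _ "{..<n} \<times> {..<n}"]) auto

lemma mem_pairs_lt_iff: "(i, j) \<in># pairs_lt n \<longleftrightarrow> i < j \<and> j < n"
  by (simp add: pairs_lt_def finite_pairs_lt_set)

text \<open>The pair \<open>(k, l)\<close> is sent to \<open>(p k, p l)\<close> put in increasing order; by symmetry of \<open>h\<close>
  this is a value-preserving bijection of the pairs \<open>i < j\<close>.\<close>

lemma image_mset_pairs_lt_permute:
  assumes p: "bij_betw p {..<n} {..<n}" and h: "\<And>i j. h i j = h j i"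
  shows "image_mset (\<lambda>(k, l). h (p k) (p l)) (pairs_lt n) = image_mset (\<lambda>(i, j). h i j) (pairs_lt n)"
proof -
  define A where "A = {(i, j). i < j \<and> j < (n::nat)}"
  define g where "g = (\<lambda>(k, l). (min (p k) (p l), max (p k) (p l)))"
  have p_less: "p k < n" if "k < n" for k
    using p that by (auto simp: bij_betw_def)
  have p_eq: "p k = p l \<longleftrightarrow> k = l" if "k < n" "l < n" for k l
    using p that by (auto simp: bij_betw_def inj_on_def)
  have gA: "g ` A \<subseteq> A"
  proof
    fix x assume "x \<in> g ` A"
    then obtain k l where "k < l" "l < n" and x: "x = g (k, l)"
      by (auto simp: A_def)
    then have "p k \<noteq> p l" "p k < n" "p l < n"
      using p_eq p_less by auto
    then show "x \<in> A"
      unfolding x by (auto simp: A_def g_def min_def max_def)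
  qed
  have g_inj: "inj_on g A"
  proof (rule inj_onI)
    fix x y assume "x \<in> A" "y \<in> A" "g x = g y"
    then obtain k l k' l' where x: "x = (k, l)" "k < l" "l < n" and y: "y = (k', l')" "k' < l'" "l' < n"
      by (auto simp: A_def)
    with \<open>g x = g y\<close> have "(p k = p k' \<and> p l = p l') \<or> (p k = p l' \<and> p l = p k')"
      by (auto simp: g_def min_def max_def split: if_splits)
    then show "x = y"
      using x y p_eq by (metis less_trans not_less_iff_gr_or_eq)
  qed
  have h_g: "h (p k) (p l) = ((\<lambda>(i, j). h i j) \<circ> g) (k, l)" for k l
    using h[of "p k" "p l"] by (simp add: g_def min_def max_def)
  have "image_mset (\<lambda>(k, l). h (p k) (p l)) (pairs_lt n) = image_mset ((\<lambda>(i, j). h i j) \<circ> g) (pairs_lt n)"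
    by (rule image_mset_cong) (clarsimp simp only: h_g)
  also have "\<dots> = image_mset (\<lambda>(i, j). h i j) (mset_set (g ` A))"
    by (simp add: pairs_lt_def A_def[symmetric] image_mset_mset_set[OF g_inj] flip: image_mset.compositionality)
  also have "g ` A = A"
    using endo_inj_surj[OF finite_pairs_lt_set[of n, folded A_def] gA g_inj] .
  finally show ?thesis
    by (simp add: pairs_lt_def A_def)
qed

lemma image_mset_abs_minor2_permute_columns:
  assumes "bij_betw p {..<n} {..<n}"
  shows "image_mset (\<lambda>(i, j). \<bar>minor2 (\<lambda>r c. X r (p c)) i j\<bar>) (pairs_lt n) =
         image_mset (\<lambda>(i, j). \<bar>minor2 X i j\<bar>) (pairs_lt n)"
proof -
  have "\<bar>minor2 (\<lambda>r c. X r (p c)) i j\<bar> = \<bar>minor2 X (p i) (p j)\<bar>" for i j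
    by (simp add: minor2_def)
  then show ?thesis
    using image_mset_pairs_lt_permute[OF assms, of "\<lambda>i j. \<bar>minor2 X i j\<bar>"] abs_minor2_commute
    by simp
qed

theorem mainTheorem7:
  fixes n :: nat and X :: "nat \<Rightarrow> nat \<Rightarrow> real"
  shows "\<exists>Y :: nat \<Rightarrow> nat \<Rightarrow> real.
           (\<forall>i j. i < j \<and> j < n \<longrightarrow> minor2 Y i j \<ge> 0) \<and>
           image_mset (\<lambda>(i, j). minor2 Y i j) (pairs_lt n) =
           image_mset (\<lambda>(i, j). \<bar>minor2 X i j\<bar>) (pairs_lt n)"
proof -
  define s :: "nat \<Rightarrow> real" where "s c = (if X 1 c < 0 then -1 else 1)" for c
  define W where "W = (\<lambda>r c. s c * X r c)"
  define key where "key c = half_plane_key (W 0 c) (W 1 c)" for c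
  obtain p where p: "bij_betw p {..<n} {..<n}" and sorted: "\<And>k l. k \<le> l \<Longrightarrow> l < n \<Longrightarrow> key (p k) \<le> key (p l)"
    using exists_sorting_permutation by blast
  define Y where "Y = (\<lambda>r k. W r (p k))"
  have Y_nonneg: "minor2 Y k l \<ge> 0" if "k < l" "l < n" for k l
  proof -
    have "W 1 c \<ge> 0" for c
      by (simp add: W_def s_def)
    with sorted[of k l] that show ?thesis
      using det_nonneg_if_half_plane_key_le by (simp add: key_def minor2_def Y_def)
  qed
  then have "image_mset (\<lambda>(i, j). minor2 Y i j) (pairs_lt n) = image_mset (\<lambda>(i, j). \<bar>minor2 Y i j\<bar>) (pairs_lt n)"
    by (intro image_mset_cong) (clarsimp simp: mem_pairs_lt_iff)
  also have "\<dots> = image_mset (\<lambda>(i, j). \<bar>minor2 W i j\<bar>) (pairs_lt n)"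
    unfolding Y_def by (rule image_mset_abs_minor2_permute_columns[OF p])
  also have "\<dots> = image_mset (\<lambda>(i, j). \<bar>minor2 X i j\<bar>) (pairs_lt n)"
    unfolding W_def by (simp add: abs_minor2_scale_columns s_def)
  finally show ?thesis
    using Y_nonneg by blast
qed

end
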